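(* When Algorithm A (described below) is applied to a sequence $\epsilon$, producing $\epsilon'$, there is no position $i$ that is a transient occurrence of $q$.
   Context: The reduction of an integer word replaces each occurrence of its $k$-th smallest distinct value by $k-1$; a consecutive pattern $\underline{p_1p_2p_3p_4}$ occurs in a sequence at position $i$ if the reduction of its entries in positions $i,\dots,i+3$ equals $p_1p_2p_3p_4$. Let $p=\underline{0102}$ and $q=\underline{0112}$. Algorithm A, on input an integer sequence $\mathrm{seq}=\epsilon_1\cdots\epsilon_n$: let $E_p$, $E_q$ be the sets of positions of occurrences of $p$, resp. $q$, in the input sequence; set $\mathrm{last}:=$ null. For $i=1,2,\dots,n$ in order: let $N_p,N_q$ be the sets of positions of occurrences of $p$, resp. $q$, in the current sequence. If $i-2\in E_p$: set $\mathrm{last}:=\mathrm{seq}[i]$ and $\mathrm{seq}[i]:=\mathrm{seq}[i-1]$. Else if $i-2\in E_q$: set $\mathrm{last}:=\mathrm{seq}[i]$ and $\mathrm{seq}[i]:=\mathrm{seq}[i-2]$. Else if $i-2\in N_p$ or $i-2\in N_q$: swap the values of $\mathrm{seq}[i]$ and $\mathrm{last}$. Output $\mathrm{seq}$. With $\epsilon$ the input and $\epsilon'$ the output: position $i$ is an original occurrence of $q$ if $\epsilon_i<\epsilon_{i+1}=\epsilon_{i+2}<\epsilon_{i+3}$; it is a transient occurrence of $q$ if it is not an original occurrence of $q$ but $\epsilon'_i<\epsilon_{i+1}=\epsilon_{i+2}<\epsilon_{i+3}$. *)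

theory Defs
  imports Main
begin

text \<open>Sequences are lists of integers; positions are 1-based as in the paper:
  position j of w is w ! (j - 1).\<close>

definition red :: "int list \<Rightarrow> nat list" where
  "red w = map (\<lambda>x. card {y \<in> set w. y < x}) w"

definition occ :: "nat list \<Rightarrow> int list \<Rightarrow> nat \<Rightarrow> bool" where
  "occ pat w i \<longleftrightarrow> 1 \<le> i \<and> i + 3 \<le> length w \<and> red (take 4 (drop (i - 1) w)) = pat"

definition patP :: "nat list" where "patP = [0,1,0,2]"
definition patQ :: "nat list" where "patQ = [0,1,1,2]"

text \<open>One iteration (index i, 1-based) of Algorithm A. The state is the current
  sequence together with the variable last (None = null). Ep, Eq are the
  occurrence sets of p, q in the input.\<close>
definition stepA :: "nat set \<Rightarrow> nat set \<Rightarrow> nat \<Rightarrow> int list \<times> int option \<Rightarrow> int list \<times> int option" where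
  "stepA Ep Eq i st = (let s = fst st; last = snd st in
     if 3 \<le> i \<and> i - 2 \<in> Ep then (s[i - 1 := s ! (i - 2)], Some (s ! (i - 1)))
     else if 3 \<le> i \<and> i - 2 \<in> Eq then (s[i - 1 := s ! (i - 3)], Some (s ! (i - 1)))
     else if 3 \<le> i \<and> (occ patP s (i - 2) \<or> occ patQ s (i - 2)) then
       (case last of Some v \<Rightarrow> (s[i - 1 := v], Some (s ! (i - 1))) | None \<Rightarrow> (s, last))
     else (s, last))"

definition algA :: "int list \<Rightarrow> int list" where
  "algA eps = fst (fold (stepA {j. occ patP eps j} {j. occ patQ eps j})
                        [1..<length eps + 1] (eps, None))"

definition orig_occ_q :: "int list \<Rightarrow> nat \<Rightarrow> bool" where
  "orig_occ_q eps i \<longleftrightarrow> 1 \<le> i \<and> i + 3 \<le> length eps \<and>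
     eps ! (i - 1) < eps ! i \<and> eps ! i = eps ! (i + 1) \<and> eps ! (i + 1) < eps ! (i + 2)"

definition transient_occ_q :: "int list \<Rightarrow> int list \<Rightarrow> nat \<Rightarrow> bool" where
  "transient_occ_q eps eps' i \<longleftrightarrow> 1 \<le> i \<and> i + 3 \<le> length eps \<and>
     \<not> orig_occ_q eps i \<and>
     eps' ! (i - 1) < eps ! i \<and> eps ! i = eps ! (i + 1) \<and> eps ! (i + 1) < eps ! (i + 2)"

end

theory Submission
  imports Defs
begin

text \<open>Algorithm A only ever overwrites the i-th entry when p or q occurs at position i - 2,
  either in the input or in the current sequence, which still agrees with the input from
  position i on. Both patterns end in an ascent, so every entry of the output that differs
  from the input sits at an ascent \<open>\<epsilon>\<^sub>i < \<epsilon>\<^sub>i\<^sub>+\<^sub>1\<close> of the input. A transient occurrence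
  of q at i would need \<open>\<epsilon>'\<^sub>i \<noteq> \<epsilon>\<^sub>i\<close>, hence \<open>\<epsilon>\<^sub>i < \<epsilon>\<^sub>i\<^sub>+\<^sub>1\<close>, making i an original occurrence.\<close>

definition ascent :: "int list \<Rightarrow> nat \<Rightarrow> bool" where
  "ascent w m \<longleftrightarrow> m + 1 < length w \<and> w ! m < w ! (m + 1)"

definition edited_only_at_ascents :: "int list \<Rightarrow> nat \<Rightarrow> int list \<Rightarrow> bool" where
  "edited_only_at_ascents eps k s \<longleftrightarrow> length s = length eps \<and>
     (\<forall>m < length eps. s ! m \<noteq> eps ! m \<longrightarrow> m < k \<and> ascent eps m)"

lemma red_nth_less_imp_less:
  assumes "a < length w" "b < length w" "red w ! a < red w ! b"
  shows "w ! a < w ! b"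
proof (rule ccontr)
  assume "\<not> w ! a < w ! b"
  then have "{y \<in> set w. y < w ! b} \<subseteq> {y \<in> set w. y < w ! a}" by auto
  then have "card {y \<in> set w. y < w ! b} \<le> card {y \<in> set w. y < w ! a}"
    by (intro card_mono) auto
  with assms show False by (simp add: red_def)
qed

lemma occ_ascent:
  assumes "occ pat w j" "pat ! 2 < pat ! 3"
  shows "ascent w (j + 1)"
proof -
  let ?v = "take 4 (drop (j - 1) w)"
  have j: "1 \<le> j" "j + 3 \<le> length w" and "red ?v = pat"
    using assms(1) by (auto simp: occ_def)
  then have "?v ! 2 < ?v ! 3"
    using assms(2) by (intro red_nth_less_imp_less) auto
  with j show ?thesis by (simp add: ascent_def nth_drop)
qed

lemma occ_patP_or_patQ_ascent:
  assumes "occ patP w j \<or> occ patQ w j"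
  shows "ascent w (j + 1)"
  using assms occ_ascent[of patP] occ_ascent[of patQ] by (auto simp: patP_def patQ_def)

lemma fst_stepA_cases:
  obtains "fst (stepA Ep Eq i st) = fst st"
  | v where "fst (stepA Ep Eq i st) = (fst st)[i - 1 := v]" "3 \<le> i"
      "i - 2 \<in> Ep \<or> i - 2 \<in> Eq \<or> occ patP (fst st) (i - 2) \<or> occ patQ (fst st) (i - 2)"
proof -
  have "fst (stepA Ep Eq i st) = fst st \<or>
    (\<exists>v. fst (stepA Ep Eq i st) = (fst st)[i - 1 := v] \<and> 3 \<le> i \<and>
      (i - 2 \<in> Ep \<or> i - 2 \<in> Eq \<or> occ patP (fst st) (i - 2) \<or> occ patQ (fst st) (i - 2)))"
    by (cases "snd st") (auto simp: stepA_def Let_def)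
  with that show thesis by blast
qed

lemma stepA_edited_only_at_ascents:
  assumes edits: "edited_only_at_ascents eps k (fst st)"
  shows "edited_only_at_ascents eps (Suc k)
           (fst (stepA {j. occ patP eps j} {j. occ patQ eps j} (Suc k) st))"
proof -
  let ?s = "fst st"
  have weakened: "edited_only_at_ascents eps (Suc k) ?s"
    using edits by (auto simp: edited_only_at_ascents_def)
  show ?thesis
  proof (cases rule: fst_stepA_cases[of "{j. occ patP eps j}" "{j. occ patQ eps j}" "Suc k" st])
    case 1
    with weakened show ?thesis by simp
  next
    case (2 v)
    then obtain j where k: "k = Suc j"
      and occ: "occ patP eps j \<or> occ patQ eps j \<or> occ patP ?s j \<or> occ patQ ?s j"
      by (cases k) auto
    have len: "length ?s = length eps"
      using edits by (simp add: edited_only_at_ascents_def)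
    have "ascent eps k \<or> ascent ?s k"
      using occ occ_patP_or_patQ_ascent[of eps j] occ_patP_or_patQ_ascent[of ?s j]
      by (auto simp: k)
    moreover have agrees_from_k: "?s ! m = eps ! m" if "k \<le> m" "m < length eps" for m
      using edits that by (auto simp: edited_only_at_ascents_def)
    ultimately have "ascent eps k"
      by (auto simp: ascent_def len)
    with 2(1) weakened show ?thesis
      by (auto simp: edited_only_at_ascents_def) (metis nth_list_update_neq)
  qed
qed

lemma fold_stepA_edited_only_at_ascents:
  "edited_only_at_ascents eps k
     (fst (fold (stepA {j. occ patP eps j} {j. occ patQ eps j}) [1..<k + 1] (eps, None)))"
proof (induction k)
  case 0
  then show ?case by (simp add: edited_only_at_ascents_def)
next
  case (Suc k)
  then show ?case using stepA_edited_only_at_ascents[OF Suc] by simp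
qed

lemma algA_nth_changed_imp_ascent:
  assumes "m < length eps" "algA eps ! m \<noteq> eps ! m"
  shows "ascent eps m"
  using assms fold_stepA_edited_only_at_ascents[of eps "length eps"]
  by (simp add: algA_def edited_only_at_ascents_def)

theorem corollary1:
  fixes eps :: "int list"
  shows "\<not> (\<exists>i. transient_occ_q eps (algA eps) i)"
proof
  assume "\<exists>i. transient_occ_q eps (algA eps) i"
  then obtain i where t: "transient_occ_q eps (algA eps) i" ..
  then have i: "Suc (i - 1) = i" "i - 1 < length eps"
    and changed: "algA eps ! (i - 1) \<noteq> eps ! (i - 1)"
    by (auto simp: transient_occ_q_def orig_occ_q_def)
  then have "eps ! (i - 1) < eps ! i"
    using algA_nth_changed_imp_ascent by (fastforce simp: ascent_def)
  with t show False
    by (auto simp: transient_occ_q_def orig_occ_q_def)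
qed

end
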